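(* Let $(M,g)$ be a Riemannian manifold of dimension $n$, with $\mathcal{T}M$, $V$, $G$, $\xi_1,\xi_2$, $\omega^1,\omega^2$, $f$ as in the context (on the open set where $F^2+K^2>0$). Let $V_{\xi_2}=\{X\in V:\ \omega^2(X)=0\}$, $\overline{G}=G|_{V_{\xi_2}}$, $\overline{f}=f|_{V_{\xi_2}}$ (an endomorphism of $V_{\xi_2}$) and $\overline{\eta}=\omega^1|_{V_{\xi_2}}$. Then for all sections $X,Y$ of $V_{\xi_2}$, $$\overline{G}(\overline{f}(X),\overline{f}(Y))=\overline{G}(X,Y)-\overline{\eta}(X)\overline{\eta}(Y).$$
   Context: Let $M$ be an $n$-dimensional smooth manifold with a Riemannian metric $g=(g_{ij})$, with inverse matrix $(g^{ij})$; summation convention is used. The big-tangent manifold $\mathcal{T}M$ is the total space of $TM\oplus T^*M\to M$; over a chart $(U,(x^i))$ it has coordinates $(x^i,y^i,p_i)$, the point being $y^i\frac{\partial}{\partial x^i}|_x+p_i\,dx^i|_x$. The vertical bundle $V\subset T\mathcal{T}M$ is tangent to the fibres of $\mathcal{T}M\to M$, locally spanned by $\{\frac{\partial}{\partial y^i},\frac{\partial}{\partial p_i}\}$. Put $y_i=g_{ij}y^j$, $p^i=g^{ij}p_j$, $F^2=g_{ij}y^iy^j$, $K^2=g^{ij}p_ip_j$; all objects are considered where $F^2+K^2>0$. $G$ is the metric on $V$ with $G(\frac{\partial}{\partial y^i},\frac{\partial}{\partial y^j})=g_{ij}$, $G(\frac{\partial}{\partial p_i},\frac{\partial}{\partial p_j})=g^{ij}$,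 $G(\frac{\partial}{\partial y^i},\frac{\partial}{\partial p_j})=0$. $\phi:V\to V$ is given by $\phi(\frac{\partial}{\partial y^i})=-g_{ij}\frac{\partial}{\partial p_j}$, $\phi(\frac{\partial}{\partial p_i})=g^{ij}\frac{\partial}{\partial y^j}$. $\xi_2=\frac{1}{\sqrt{F^2+K^2}}(y^i\frac{\partial}{\partial y^i}+p_i\frac{\partial}{\partial p_i})$, $\xi_1=\frac{1}{\sqrt{F^2+K^2}}(p^i\frac{\partial}{\partial y^i}-y_i\frac{\partial}{\partial p_i})$. $\omega^1,\omega^2\in\Gamma(V^* )$: $\omega^1(\frac{\partial}{\partial y^i})=\frac{p_i}{\sqrt{F^2+K^2}}$, $\omega^1(\frac{\partial}{\partial p_i})=-\frac{y^i}{\sqrt{F^2+K^2}}$, $\omega^2(\frac{\partial}{\partial y^i})=\frac{y_i}{\sqrt{F^2+K^2}}$, $\omega^2(\frac{\partial}{\partial p_i})=\frac{p^i}{\sqrt{F^2+K^2}}$. $f:V\to V$, $f(X)=\phi(X)-\omega^2(X)\xi_1+\omega^1(X)\xi_2$. *)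

theory Defs
  imports "HOL-Analysis.Analysis"
begin

text \<open>Pointwise (fibrewise) model.  At a point (x^i, y^i, p_i) of the big-tangent
manifold, the Riemannian metric at x is the symmetric positive definite matrix
g = (g_ij) :: real^'n^'n, its inverse (g^ij) is matrix_inv g.  A vertical vector
X = a^i d/dy^i + b_i d/dp_i is represented by the pair (a, b).\<close>

type_synonym 'n vvec = "(real^'n) \<times> (real^'n)"

definition riem_metric :: "real^'n^'n \<Rightarrow> bool" where
  "riem_metric g \<longleftrightarrow> transpose g = g \<and> (\<forall>v. v \<noteq> 0 \<longrightarrow> v \<bullet> (g *v v) > 0)"

definition Fsq :: "real^'n^'n \<Rightarrow> real^'n \<Rightarrow> real" where
  "Fsq g y = y \<bullet> (g *v y)"

definition Ksq :: "real^'n^'n \<Rightarrow> real^'n \<Rightarrow> real" where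
  "Ksq g p = p \<bullet> (matrix_inv g *v p)"

definition nrm :: "real^'n^'n \<Rightarrow> real^'n \<Rightarrow> real^'n \<Rightarrow> real" where
  "nrm g y p = sqrt (Fsq g y + Ksq g p)"

definition Gv :: "real^'n^'n \<Rightarrow> 'n vvec \<Rightarrow> 'n vvec \<Rightarrow> real" where
  "Gv g X Y = fst X \<bullet> (g *v fst Y) + snd X \<bullet> (matrix_inv g *v snd Y)"

definition phiv :: "real^'n^'n \<Rightarrow> 'n vvec \<Rightarrow> 'n vvec" where
  "phiv g X = (matrix_inv g *v snd X, - (g *v fst X))"

definition xi2 :: "real^'n^'n \<Rightarrow> real^'n \<Rightarrow> real^'n \<Rightarrow> 'n vvec" where
  "xi2 g y p = ((1 / nrm g y p) *\<^sub>R y, (1 / nrm g y p) *\<^sub>R p)"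

definition xi1 :: "real^'n^'n \<Rightarrow> real^'n \<Rightarrow> real^'n \<Rightarrow> 'n vvec" where
  "xi1 g y p = ((1 / nrm g y p) *\<^sub>R (matrix_inv g *v p), (1 / nrm g y p) *\<^sub>R (- (g *v y)))"

definition omega1 :: "real^'n^'n \<Rightarrow> real^'n \<Rightarrow> real^'n \<Rightarrow> 'n vvec \<Rightarrow> real" where
  "omega1 g y p X = (p \<bullet> fst X - y \<bullet> snd X) / nrm g y p"

definition omega2 :: "real^'n^'n \<Rightarrow> real^'n \<Rightarrow> real^'n \<Rightarrow> 'n vvec \<Rightarrow> real" where
  "omega2 g y p X = ((g *v y) \<bullet> fst X + (matrix_inv g *v p) \<bullet> snd X) / nrm g y p"

definition fv :: "real^'n^'n \<Rightarrow> real^'n \<Rightarrow> real^'n \<Rightarrow> 'n vvec \<Rightarrow> 'n vvec" where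
  "fv g y p X = phiv g X - omega2 g y p X *\<^sub>R xi1 g y p + omega1 g y p X *\<^sub>R xi2 g y p"

definition V_xi2 :: "real^'n^'n \<Rightarrow> real^'n \<Rightarrow> real^'n \<Rightarrow> 'n vvec set" where
  "V_xi2 g y p = {X. omega2 g y p X = 0}"

end

theory Submission
  imports Defs
begin

text \<open>On \<open>ker \<omega>\<^sup>2\<close> the endomorphism is \<open>f X = \<phi> X + \<omega>\<^sup>1(X) \<xi>\<^sub>2\<close>. The map \<open>\<phi>\<close> is a
  \<open>G\<close>-isometry, \<open>\<xi>\<^sub>2\<close> is a \<open>G\<close>-unit vector, \<open>G(\<phi> X, \<xi>\<^sub>2) = -\<omega>\<^sup>1(X)\<close> and
  \<open>\<omega>\<^sup>2 = G(\<xi>\<^sub>2, -)\<close>. Expanding \<open>G(f X, f Y)\<close> bilinearly then gives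
  \<open>G(X,Y) - 2\<omega>\<^sup>1(X)\<omega>\<^sup>1(Y) + \<omega>\<^sup>1(X)\<omega>\<^sup>1(Y)\<close>, and \<open>\<omega>\<^sup>2(f X) = -\<omega>\<^sup>1(X) + \<omega>\<^sup>1(X) = 0\<close>.\<close>

lemma matrix_inv_right_left:
  fixes A :: "'a::semiring_1^'n^'n"
  assumes "invertible A"
  shows "A ** matrix_inv A = mat 1 \<and> matrix_inv A ** A = mat 1"
  using assms unfolding invertible_def matrix_inv_def by (rule someI_ex)

lemma transpose_matrix_inv_symmetric:
  fixes A :: "'a::comm_semiring_1^'n^'n"
  assumes "invertible A" and "transpose A = A"
  shows "transpose (matrix_inv A) = matrix_inv A"
proof -
  note inv = matrix_inv_right_left[OF assms(1)]
  have "transpose (matrix_inv A) ** A = mat 1"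
    by (metis inv assms(2) matrix_transpose_mul transpose_mat)
  then have "transpose (matrix_inv A) = matrix_inv A ** A ** matrix_inv A"
    by (metis inv matrix_mul_assoc matrix_mul_lid matrix_mul_rid)
  then show ?thesis
    by (simp add: inv matrix_mul_assoc)
qed

lemma inner_matrix_vector_symmetric:
  fixes M :: "real^'n^'n"
  assumes "transpose M = M"
  shows "(M *v u) \<bullet> v = u \<bullet> (M *v v)"
  by (metis assms dot_lmul_matrix vector_transpose_matrix)

lemma riem_metric_invertible:
  assumes "riem_metric g"
  shows "invertible g"
proof -
  have "g *v x = 0 \<Longrightarrow> x = 0" for x
    using assms unfolding riem_metric_def by (metis inner_zero_right less_irrefl)
  then show ?thesis
    using matrix_left_invertible_ker invertible_left_inverse by blast
qed

lemma riem_metric_facts: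
  assumes "riem_metric g"
  shows "transpose g = g" and "transpose (matrix_inv g) = matrix_inv g"
    and "g *v (matrix_inv g *v v) = v" and "matrix_inv g *v (g *v v) = v"
proof -
  show sym: "transpose g = g"
    using assms unfolding riem_metric_def by simp
  note inv = matrix_inv_right_left[OF riem_metric_invertible[OF assms]]
  show "transpose (matrix_inv g) = matrix_inv g"
    by (rule transpose_matrix_inv_symmetric[OF riem_metric_invertible[OF assms] sym])
  show "g *v (matrix_inv g *v v) = v" "matrix_inv g *v (g *v v) = v"
    by (simp_all add: matrix_vector_mul_assoc inv)
qed

lemma Gv_add_left: "Gv g (X + X') Y = Gv g X Y + Gv g X' Y"
  by (simp add: Gv_def inner_add_left)

lemma Gv_add_right: "Gv g X (Y + Y') = Gv g X Y + Gv g X Y'"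
  by (simp add: Gv_def inner_add_left inner_add_right matrix_vector_right_distrib)

lemma Gv_scaleR_left: "Gv g (c *\<^sub>R X) Y = c * Gv g X Y"
  by (simp add: Gv_def algebra_simps)

lemma Gv_scaleR_right: "Gv g X (c *\<^sub>R Y) = c * Gv g X Y"
  by (simp add: Gv_def matrix_vector_mult_scaleR algebra_simps)

lemma Gv_commute:
  assumes "riem_metric g"
  shows "Gv g X Y = Gv g Y X"
  unfolding Gv_def
  by (metis inner_commute inner_matrix_vector_symmetric riem_metric_facts(1,2)[OF assms])

lemma Gv_phiv_phiv:
  assumes "riem_metric g"
  shows "Gv g (phiv g X) (phiv g Y) = Gv g X Y"
  using riem_metric_facts[OF assms] Gv_commute[OF assms, of Y X]
  by (simp add: Gv_def phiv_def linear_neg[OF matrix_vector_mul_linear]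
      inner_matrix_vector_symmetric inner_commute add.commute)

lemma Gv_xi2_xi2:
  assumes "Fsq g y + Ksq g p > 0"
  shows "Gv g (xi2 g y p) (xi2 g y p) = 1"
proof -
  have "nrm g y p ^ 2 = y \<bullet> (g *v y) + p \<bullet> (matrix_inv g *v p)"
    using assms unfolding nrm_def Fsq_def Ksq_def by simp
  moreover have "y \<bullet> (g *v y) + p \<bullet> (matrix_inv g *v p) > 0"
    using assms unfolding Fsq_def Ksq_def .
  ultimately show ?thesis
    by (simp add: Gv_def xi2_def matrix_vector_mult_scaleR power2_eq_square
        add_divide_distrib[symmetric])
qed

lemma Gv_phiv_xi2:
  assumes "riem_metric g"
  shows "Gv g (phiv g X) (xi2 g y p) = - omega1 g y p X"
  using riem_metric_facts[OF assms]
  by (simp add: Gv_def phiv_def xi2_def omega1_def matrix_vector_mult_scaleR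
      linear_neg[OF matrix_vector_mul_linear] inner_matrix_vector_symmetric inner_commute diff_divide_distrib)

lemma omega2_eq_Gv_xi2:
  assumes "riem_metric g"
  shows "omega2 g y p X = Gv g (xi2 g y p) X"
  using riem_metric_facts(1,2)[OF assms]
  by (simp add: Gv_def xi2_def omega2_def inner_matrix_vector_symmetric add_divide_distrib)

lemma fv_on_V_xi2:
  assumes "X \<in> V_xi2 g y p"
  shows "fv g y p X = phiv g X + omega1 g y p X *\<^sub>R xi2 g y p"
  using assms by (simp add: fv_def V_xi2_def)

theorem theorem5p5:
  fixes g :: "real^'n^'n" and y p :: "real^'n" and X Y :: "'n vvec"
  assumes "riem_metric g"
    and "Fsq g y + Ksq g p > 0"
    and "X \<in> V_xi2 g y p" and "Y \<in> V_xi2 g y p"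
  shows "fv g y p X \<in> V_xi2 g y p \<and>
         Gv g (fv g y p X) (fv g y p Y) = Gv g X Y - omega1 g y p X * omega1 g y p Y"
proof
  note G_bilinear = Gv_add_left Gv_add_right Gv_scaleR_left Gv_scaleR_right
  note G_values = Gv_phiv_phiv[OF assms(1)] Gv_xi2_xi2[OF assms(2)] Gv_phiv_xi2[OF assms(1)]
  have "omega2 g y p (fv g y p X) = 0"
    using Gv_commute[OF assms(1), of "xi2 g y p" "phiv g X"]
    by (simp add: fv_on_V_xi2[OF assms(3)] omega2_eq_Gv_xi2[OF assms(1)] G_bilinear G_values)
  then show "fv g y p X \<in> V_xi2 g y p"
    by (simp add: V_xi2_def)
  show "Gv g (fv g y p X) (fv g y p Y) = Gv g X Y - omega1 g y p X * omega1 g y p Y"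
    using Gv_commute[OF assms(1), of "xi2 g y p" "phiv g Y"]
    by (simp add: fv_on_V_xi2 assms(3,4) G_bilinear G_values algebra_simps)
qed

end
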